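(* For every sequence ${\mathbf s}=(s_1,\dots,s_l)$ in $\widehat{\mathcal S}$ with $l\ge1$ we have ${\mathcal Y}_T({\mathbf s})=\Delta({\mathcal Y}_T({\mathbf s}'))\oplus(c^{\alpha_l})^{-1}\big(\Delta({\mathcal Y}_T({\mathbf s}'))\big)\subset\bigoplus_{\sigma\in I({\mathbf s})}Q_T$.
   Context: $R$ irreducible reduced finite root system (positive roots $R^+$, simple roots $\Pi$, highest root $\gamma$); $\widehat X=X\oplus\mathbb Z$, $\delta=(0,-1)$, affine roots $\widehat R=\{\alpha+n\delta\}$. $\widehat{\mathcal W}$ generated by $s_{\alpha,n}(v,m)=(v-(\langle\alpha,v\rangle-mn)\alpha^\vee,m)$, acting contragrediently on $\widehat X$ (permuting $\widehat R$); $\widehat{\mathcal S}=\{s_{\alpha,0}:\alpha\in\Pi\}\cup\{s_{\gamma,1}\}$ with simple affine roots $\alpha$ resp. $-\gamma+\delta$. $T$: commutative unital domain, $2$ not a zero divisor, affine roots nonzero in $\widehat X\otimes T$; $S_T$ the symmetric algebra of $\widehat X\otimes T$; $Q_T=S_T[2^{-1}][\alpha^{-1}:\alpha\in\widehat R]$. For ${\mathbf s}$: $I({\mathbf s})$ = strictly increasing tuples in $\{1,\dots,l\}$, $\operatorname{ev}(i_1,\dots,i_n)=s_{i_1}\cdots s_{i_n}$; ${\mathbf s}'=(s_1,\dots,s_{l-1})$, $I({\mathbf s})=I({\mathbf s}')\sqcup I({\mathbf s}')s_l$; $\Delta\colon\bigoplus_{I({\mathbf s}')}Q_T\to\bigoplus_{I({\mathbf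 s})}Q_T$, $\Delta(z)_\gamma=\Delta(z)_{\gamma s_l}=z_\gamma$; $c^\lambda$ multiplies the $\sigma$-component by $\operatorname{ev}(\sigma)(\lambda)\otimes 1$, and $c^{\alpha_l}$ ($\alpha_l$ the simple affine root of $s_l$) is invertible on $\bigoplus_{I({\mathbf s})}Q_T$. ${\mathcal Y}_T(\emptyset)=S_T\subset Q_T$, ${\mathcal Y}_T({\mathbf s})=\Delta({\mathcal Y}_T({\mathbf s}'))+(c^{\alpha_l})^{-1}(\Delta({\mathcal Y}_T({\mathbf s}')))$. *)

theory Defs
  imports "HOL-Library.Function_Algebras" "HOL-Library.Poly_Mapping" "HOL-Computational_Algebra.Fraction_Field"
begin

section \<open>Lattices: X = Z^r (coordinates 0..r-1), X^vee = Z^r with standard pairing\<close>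

type_synonym lat = "nat \<Rightarrow> int"
type_synonym alat = "lat \<times> int"   (* hat X = X (+) Z ; the element (v,k) *)

definition in_lat :: "nat \<Rightarrow> lat \<Rightarrow> bool" where
  "in_lat r x \<longleftrightarrow> (\<forall>i\<ge>r. x i = 0)"

definition pair :: "nat \<Rightarrow> lat \<Rightarrow> lat \<Rightarrow> int" where
  "pair r x y = (\<Sum>i<r. x i * y i)"

definition lsmult :: "int \<Rightarrow> lat \<Rightarrow> lat" where
  "lsmult c x = (\<lambda>i. c * x i)"

text \<open>Root datum (X, R, X^vee, R^vee) with coroot bijection cor.\<close>
definition root_datum :: "nat \<Rightarrow> lat set \<Rightarrow> (lat \<Rightarrow> lat) \<Rightarrow> bool" where
  "root_datum r R cor \<longleftrightarrow>
     finite R \<and> (\<forall>a\<in>R. in_lat r a \<and> in_lat r (cor a)) \<and> 0 \<notin> R \<and> inj_on cor R \<and>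
     (\<forall>a\<in>R. pair r a (cor a) = 2) \<and>
     (\<forall>a\<in>R. \<forall>b\<in>R. b - lsmult (pair r b (cor a)) a \<in> R) \<and>
     (\<forall>a\<in>R. \<forall>b\<in>R. cor b - lsmult (pair r a (cor b)) (cor a) \<in> cor ` R)"

definition reduced_rs :: "lat set \<Rightarrow> bool" where
  "reduced_rs R \<longleftrightarrow> (\<forall>a\<in>R. \<forall>b\<in>R. (\<exists>m n::int. n \<noteq> 0 \<and> lsmult n b = lsmult m a) \<longrightarrow> b = a \<or> b = - a)"

definition irreducible_rs :: "nat \<Rightarrow> lat set \<Rightarrow> (lat \<Rightarrow> lat) \<Rightarrow> bool" where
  "irreducible_rs r R cor \<longleftrightarrow> R \<noteq> {} \<and>
     \<not> (\<exists>A B. A \<noteq> {} \<and> B \<noteq> {} \<and> A \<union> B = R \<and> A \<inter> B = {} \<and>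
            (\<forall>a\<in>A. \<forall>b\<in>B. pair r b (cor a) = 0))"

definition int_comb :: "lat set \<Rightarrow> (lat \<Rightarrow> int) \<Rightarrow> lat" where
  "int_comb P c = (\<lambda>i. \<Sum>a\<in>P. c a * a i)"

definition nonneg_comb :: "lat set \<Rightarrow> lat \<Rightarrow> bool" where
  "nonneg_comb P v \<longleftrightarrow> (\<exists>c. (\<forall>a\<in>P. c a \<ge> 0) \<and> v = int_comb P c)"

definition is_base :: "lat set \<Rightarrow> lat set \<Rightarrow> bool" where
  "is_base R P \<longleftrightarrow> P \<subseteq> R \<and>
     (\<forall>c. int_comb P c = 0 \<longrightarrow> (\<forall>a\<in>P. c a = 0)) \<and>
     (\<forall>b\<in>R. nonneg_comb P b \<or> nonneg_comb P (- b))"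

definition pos_roots :: "lat set \<Rightarrow> lat set \<Rightarrow> lat set" where
  "pos_roots R P = {b\<in>R. nonneg_comb P b}"

definition highest_root :: "lat set \<Rightarrow> lat set \<Rightarrow> lat \<Rightarrow> bool" where
  "highest_root R P g \<longleftrightarrow> g \<in> R \<and> (\<forall>b\<in>R. nonneg_comb P (g - b))"

text \<open>alpha + n delta with delta = (0,-1) is the element (alpha, -n).\<close>
definition aff_roots :: "lat set \<Rightarrow> alat set" where
  "aff_roots R = {(a, - n) | a n. a \<in> R}"

text \<open>Contragredient action of s_{alpha,n}: it sends alpha - n delta = (alpha, n) to its negative.\<close>
definition srefl :: "nat \<Rightarrow> (lat \<Rightarrow> lat) \<Rightarrow> lat \<Rightarrow> int \<Rightarrow> alat \<Rightarrow> alat" where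
  "srefl r cor a n x = (fst x - lsmult (pair r (fst x) (cor a)) a, snd x - n * pair r (fst x) (cor a))"

text \<open>Elements of hat S are labelled: Some alpha (alpha in Pi) is s_{alpha,0}, None is s_{gamma,1}.\<close>
definition sref :: "nat \<Rightarrow> (lat \<Rightarrow> lat) \<Rightarrow> lat \<Rightarrow> lat option \<Rightarrow> alat \<Rightarrow> alat" where
  "sref r cor g t = (case t of Some a \<Rightarrow> srefl r cor a 0 | None \<Rightarrow> srefl r cor g 1)"

text \<open>simple affine root of a generator: alpha resp. -gamma + delta = (-gamma, -1)\<close>
definition sroot :: "lat \<Rightarrow> lat option \<Rightarrow> alat" where
  "sroot g t = (case t of Some a \<Rightarrow> (a, 0) | None \<Rightarrow> (- g, -1))"

definition Sgens :: "lat set \<Rightarrow> lat option set" where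
  "Sgens P = Some ` P \<union> {None}"

text \<open>I(s): strictly increasing tuples in {1..l}; ev(i1..in) = s_{i1} o ... o s_{in}\<close>
definition idx :: "nat \<Rightarrow> nat list set" where
  "idx l = {\<sigma>. sorted_wrt (<) \<sigma> \<and> set \<sigma> \<subseteq> {1..l}}"

definition ev :: "nat \<Rightarrow> (lat \<Rightarrow> lat) \<Rightarrow> lat \<Rightarrow> lat option list \<Rightarrow> nat list \<Rightarrow> alat \<Rightarrow> alat" where
  "ev r cor g s \<sigma> = foldr (\<lambda>i f. sref r cor g (s ! (i - 1)) \<circ> f) \<sigma> id"

section \<open>S_T = Sym(hat X (x) T) = T[x_0..x_r] and Q_T\<close>

type_synonym 't ST = "(nat \<Rightarrow>\<^sub>0 nat) \<Rightarrow>\<^sub>0 't"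

text \<open>hat X (x) T = T^(r+1): coordinates 0..r-1 from X, coordinate r from Z.\<close>
definition tens :: "nat \<Rightarrow> alat \<Rightarrow> nat \<Rightarrow> 't::idom" where
  "tens r x i = (if i < r then of_int (fst x i) else if i = r then of_int (snd x) else 0)"

definition lin :: "nat \<Rightarrow> (nat \<Rightarrow> 't::idom) \<Rightarrow> 't ST" where
  "lin r v = (\<Sum>i\<le>r. Poly_Mapping.single (Poly_Mapping.single i (1::nat)) (v i))"

definition linx :: "nat \<Rightarrow> alat \<Rightarrow> 't::idom ST" where
  "linx r x = lin r (tens r x)"

inductive_set denoms :: "nat \<Rightarrow> lat set \<Rightarrow> 't::idom ST set" for r R where
  one: "1 \<in> denoms r R"
| two: "q \<in> denoms r R \<Longrightarrow> 2 * q \<in> denoms r R"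
| root: "q \<in> denoms r R \<Longrightarrow> a \<in> aff_roots R \<Longrightarrow> linx r a * q \<in> denoms r R"

definition QT :: "nat \<Rightarrow> lat set \<Rightarrow> 't::idom ST fract set" where
  "QT r R = {Fract p q | p q. q \<in> denoms r R}"

definition STf :: "'t::idom ST fract set" where
  "STf = range (\<lambda>p. Fract p 1)"

text \<open>Direct sum over I(s): functions on index tuples, zero outside I(s).\<close>
definition dsum :: "nat \<Rightarrow> lat set \<Rightarrow> nat \<Rightarrow> (nat list \<Rightarrow> 't::idom ST fract) set" where
  "dsum r R l = {f. (\<forall>\<sigma>\<in>idx l. f \<sigma> \<in> QT r R) \<and> (\<forall>\<sigma>. \<sigma> \<notin> idx l \<longrightarrow> f \<sigma> = 0)}"

text \<open>Delta : (+)_{I(s')} -> (+)_{I(s)}, with l = length s.\<close>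
definition Delta :: "nat \<Rightarrow> (nat list \<Rightarrow> 'a::zero) \<Rightarrow> nat list \<Rightarrow> 'a" where
  "Delta l z \<sigma> = (if \<sigma> \<in> idx (l - 1) then z \<sigma>
      else if \<sigma> \<noteq> [] \<and> last \<sigma> = l \<and> butlast \<sigma> \<in> idx (l - 1) then z (butlast \<sigma>) else 0)"

definition cmul :: "nat \<Rightarrow> (lat \<Rightarrow> lat) \<Rightarrow> lat \<Rightarrow> lat option list \<Rightarrow> alat
     \<Rightarrow> (nat list \<Rightarrow> 't::idom ST fract) \<Rightarrow> nat list \<Rightarrow> 't ST fract" where
  "cmul r cor g s x f \<sigma> = Fract (linx r (ev r cor g s \<sigma> x)) 1 * f \<sigma>"

definition cinv :: "nat \<Rightarrow> (lat \<Rightarrow> lat) \<Rightarrow> lat \<Rightarrow> lat option list \<Rightarrow> alat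
     \<Rightarrow> (nat list \<Rightarrow> 't::idom ST fract) \<Rightarrow> nat list \<Rightarrow> 't ST fract" where
  "cinv r cor g s x f \<sigma> = f \<sigma> / Fract (linx r (ev r cor g s \<sigma> x)) 1"

definition setplus :: "('a::plus) set \<Rightarrow> 'a set \<Rightarrow> 'a set" where
  "setplus A B = {a + b | a b. a \<in> A \<and> b \<in> B}"

fun Yrev :: "nat \<Rightarrow> (lat \<Rightarrow> lat) \<Rightarrow> lat \<Rightarrow> lat option list \<Rightarrow> (nat list \<Rightarrow> 't::idom ST fract) set" where
  "Yrev r cor g [] = {f. f [] \<in> STf \<and> (\<forall>\<sigma>. \<sigma> \<noteq> [] \<longrightarrow> f \<sigma> = 0)}"
| "Yrev r cor g (t # rs) =
     (let s = rev (t # rs); A = Delta (length s) ` Yrev r cor g rs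
      in setplus A (cinv r cor g s (sroot g t) ` A))"

definition YT :: "nat \<Rightarrow> (lat \<Rightarrow> lat) \<Rightarrow> lat \<Rightarrow> lat option list \<Rightarrow> (nat list \<Rightarrow> 't::idom ST fract) set" where
  "YT r cor g s = Yrev r cor g (rev s)"

end

theory Submission
  imports Defs "HOL-Library.Product_Plus"
begin

text \<open>
  The decomposition of \<open>Y\<^sub>T(s)\<close> holds by definition, and membership in the direct sum
  follows by induction: all denominators introduced by \<open>(c\<^sup>\<alpha>\<^sub>l)\<^sup>-\<^sup>1\<close> are images
  \<open>ev(\<sigma>)(\<alpha>\<^sub>l)\<close> of an affine root, hence affine roots.
  For the directness, \<open>\<Delta>(z)\<close> takes the same value \<open>z\<^sub>\<tau>\<close> at \<open>\<tau>\<close> and at \<open>\<tau>s\<^sub>l\<close>, while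
  \<open>ev(\<tau>s\<^sub>l)(\<alpha>\<^sub>l) = -ev(\<tau>)(\<alpha>\<^sub>l)\<close> because \<open>s\<^sub>l\<close> negates its simple root. So if
  \<open>\<Delta>(z) = (c\<^sup>\<alpha>\<^sub>l)\<^sup>-\<^sup>1\<Delta>(z')\<close>, comparing the components \<open>\<tau>\<close> and \<open>\<tau>s\<^sub>l\<close> gives
  \<open>z\<^sub>\<tau> = -z\<^sub>\<tau>\<close>, and \<open>z\<^sub>\<tau> = 0\<close> since 2 is not a zero divisor.
\<close>

lemma pair_uminus_left: "pair r (- v) w = - pair r v w"
  by (simp add: pair_def sum_negf)

lemma srefl_uminus: "srefl r cor a n (- x) = - srefl r cor a n x"
  by (auto simp: srefl_def pair_uminus_left lsmult_def algebra_simps)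

lemma sref_uminus: "sref r cor g t (- x) = - sref r cor g t x"
  by (cases t) (simp_all add: sref_def srefl_uminus)

lemma ev_Nil [simp]: "ev r cor g s [] x = x"
  by (simp add: ev_def)

lemma ev_Cons [simp]: "ev r cor g s (i # \<sigma>) x = sref r cor g (s ! (i - 1)) (ev r cor g s \<sigma> x)"
  by (simp add: ev_def)

lemma ev_snoc: "ev r cor g s (\<sigma> @ [i]) x = ev r cor g s \<sigma> (sref r cor g (s ! (i - 1)) x)"
  by (induction \<sigma>) simp_all

lemma ev_uminus: "ev r cor g s \<sigma> (- x) = - ev r cor g s \<sigma> x"
  by (induction \<sigma>) (simp_all add: sref_uminus)

lemma linx_uminus: "(linx r (- x) :: 't::idom ST) = - linx r x"
proof -
  have "tens r (- x) = (\<lambda>i. - (tens r x i :: 't))"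
    by (auto simp: tens_def)
  then show ?thesis
    by (simp add: linx_def lin_def single_uminus sum_negf)
qed

lemma root_datum_uminus_root:
  assumes "root_datum r R cor" "a \<in> R" shows "- a \<in> R"
proof -
  have "a - lsmult (pair r a (cor a)) a \<in> R" "pair r a (cor a) = 2"
    using assms unfolding root_datum_def by blast+
  moreover have "a - lsmult 2 a = - a" by (simp add: lsmult_def fun_eq_iff)
  ultimately show ?thesis by simp
qed

lemma Sgens_roots:
  assumes "is_base R P" "highest_root R P g" "t \<in> Sgens P"
  shows "t = None \<or> (\<exists>a\<in>R. t = Some a)" "g \<in> R"
  using assms unfolding is_base_def highest_root_def Sgens_def by auto

lemma fst_sref_in_roots:
  assumes "root_datum r R cor" "is_base R P" "highest_root R P g" "t \<in> Sgens P" "fst x \<in> R"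
  shows "fst (sref r cor g t x) \<in> R"
  using Sgens_roots[OF assms(2-4)] assms(1,5)
  by (auto simp: sref_def srefl_def root_datum_def)

lemma fst_sroot_in_roots:
  assumes "root_datum r R cor" "is_base R P" "highest_root R P g" "t \<in> Sgens P"
  shows "fst (sroot g t) \<in> R"
  using Sgens_roots[OF assms(2-4)] root_datum_uminus_root[OF assms(1)]
  by (auto simp: sroot_def)

lemma fst_ev_in_roots:
  assumes "root_datum r R cor" "is_base R P" "highest_root R P g"
    and "\<forall>i\<in>set \<sigma>. s ! (i - 1) \<in> Sgens P" "fst x \<in> R"
  shows "fst (ev r cor g s \<sigma> x) \<in> R"
  using assms(4) by (induction \<sigma>) (auto intro: fst_sref_in_roots[OF assms(1-3)] assms(5))

lemma aff_rootsI: "fst x \<in> R \<Longrightarrow> x \<in> aff_roots R"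
  unfolding aff_roots_def by (cases x) (auto intro!: exI[of _ "- snd x"])

lemma sref_sroot:
  assumes "root_datum r R cor" "is_base R P" "highest_root R P g" "t \<in> Sgens P"
  shows "sref r cor g t (sroot g t) = - sroot g t"
proof -
  have "pair r a (cor a) = 2" if "a \<in> R" for a
    using assms(1) that unfolding root_datum_def by blast
  then show ?thesis using Sgens_roots[OF assms(2-4)]
    by (auto simp: sref_def sroot_def srefl_def pair_uminus_left lsmult_def fun_eq_iff)
qed

lemma ev_snoc_sroot:
  assumes "root_datum r R cor" "is_base R P" "highest_root R P g" "t \<in> Sgens P"
  shows "ev r cor g (s @ [t]) (\<tau> @ [Suc (length s)]) (sroot g t) = - ev r cor g (s @ [t]) \<tau> (sroot g t)"
  by (simp add: ev_snoc sref_sroot[OF assms] ev_uminus)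

lemma denoms_mult: "p \<in> denoms r R \<Longrightarrow> q \<in> denoms r R \<Longrightarrow> p * q \<in> denoms r R"
  by (induction p rule: denoms.induct) (auto simp: mult.assoc intro: denoms.intros)

lemma STf_subset_QT: "STf \<subseteq> QT r R"
  unfolding QT_def STf_def by (blast intro: denoms.one)

lemma add_in_QT:
  assumes "x \<in> QT r R" "y \<in> QT r R" shows "x + y \<in> QT r R"
proof -
  obtain p q p' q' where x: "x = Fract p q" "q \<in> denoms r R" and y: "y = Fract p' q'" "q' \<in> denoms r R"
    using assms unfolding QT_def by blast
  show ?thesis
  proof (cases "q = 0 \<or> q' = 0")
    case True
    then show ?thesis using x y assms by (auto simp: fract_collapse)
  next
    case False
    then have "x + y = Fract (p * q' + p' * q) (q * q')" using x y by simp
    then show ?thesis using denoms_mult[OF x(2) y(2)] unfolding QT_def by blast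
  qed
qed

lemma divide_linx_in_QT:
  assumes "x \<in> QT r R" "a \<in> aff_roots R" shows "x / Fract (linx r a) 1 \<in> QT r R"
proof -
  obtain p q where x: "x = Fract p q" "q \<in> denoms r R" using assms(1) unfolding QT_def by blast
  then have "x / Fract (linx r a) 1 = Fract p (linx r a * q)" by (simp add: mult.commute)
  moreover have "linx r a * q \<in> denoms r R" using x(2) assms(2) by (rule denoms.root)
  ultimately show ?thesis unfolding QT_def by blast
qed

lemma fract_eq_uminus_self:
  fixes x :: "'a::idom fract"
  assumes "(2::'a) \<noteq> 0" "x = - x" shows "x = 0"
proof -
  have "Fract (2::'a) 1 \<noteq> Fract 0 1" using assms(1) by (simp add: eq_fract)
  then have "(2::'a fract) \<noteq> 0" using of_nat_fract[where 'a='a, of 2] by (simp add: Zero_fract_def)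
  moreover have "2 * x = 0" using assms(2) by (metis add_eq_0_iff mult_2)
  ultimately show ?thesis by simp
qed

lemma ST_two_neq_zero:
  assumes "(2::'t::idom) \<noteq> 0" shows "(2::'t ST) \<noteq> 0"
proof
  assume "(2::'t ST) = 0"
  then have "Poly_Mapping.lookup (2::'t ST) 0 = 0" by simp
  then show False using assms by (simp add: lookup_numeral)
qed

lemma snoc_in_idx_Suc: "\<tau> \<in> idx n \<Longrightarrow> \<tau> @ [Suc n] \<in> idx (Suc n)"
  unfolding idx_def by (auto simp: sorted_wrt_append)

lemma idx_SucE:
  assumes "\<sigma> \<in> idx (Suc n)"
  obtains "\<sigma> \<in> idx n" | \<tau> where "\<tau> \<in> idx n" "\<sigma> = \<tau> @ [Suc n]"
proof (cases \<sigma> rule: rev_cases)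
  case Nil
  then show thesis using that(1) by (simp add: idx_def)
next
  case (snoc \<tau> m)
  then have "sorted_wrt (<) \<tau>" "\<forall>i\<in>set \<tau>. 1 \<le> i \<and> i < m" "1 \<le> m" "m \<le> Suc n"
    using assms by (auto simp: idx_def sorted_wrt_append)
  then have "if m = Suc n then \<tau> \<in> idx n else \<sigma> \<in> idx n"
    using snoc unfolding idx_def by (fastforce simp: sorted_wrt_append)
  then show thesis using that snoc by (simp split: if_splits)
qed

lemma Delta_Suc_idx: "\<tau> \<in> idx n \<Longrightarrow> Delta (Suc n) z \<tau> = z \<tau>"
  by (simp add: Delta_def)

lemma Delta_Suc_snoc: "\<tau> \<in> idx n \<Longrightarrow> Delta (Suc n) z (\<tau> @ [Suc n]) = z \<tau>"
  by (simp add: Delta_def idx_def)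

lemma idx_subset_idx_Suc: "idx n \<subseteq> idx (Suc n)"
  unfolding idx_def by auto

lemma Delta_Suc_outside:
  assumes "\<sigma> \<notin> idx (Suc n)" shows "Delta (Suc n) z \<sigma> = 0"
proof -
  have "\<sigma> \<notin> idx n" using assms idx_subset_idx_Suc by blast
  moreover have "\<not> (\<sigma> \<noteq> [] \<and> last \<sigma> = Suc n \<and> butlast \<sigma> \<in> idx n)"
    using assms snoc_in_idx_Suc[of "butlast \<sigma>" n] by (metis append_butlast_last_id)
  ultimately show ?thesis unfolding Delta_def by auto
qed

lemma Delta_zero: "Delta l (\<lambda>_. 0) = (\<lambda>_. 0)"
  by (simp add: Delta_def fun_eq_iff)

lemma cinv_zero: "cinv r cor g s x (\<lambda>_. 0) = (\<lambda>_. 0)"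
  by (simp add: cinv_def fun_eq_iff)

lemma add_in_dsum: "f \<in> dsum r R l \<Longrightarrow> f' \<in> dsum r R l \<Longrightarrow> f + f' \<in> dsum r R l"
  by (simp add: dsum_def add_in_QT)

lemma Delta_in_dsum:
  assumes "z \<in> dsum r R n" shows "Delta (Suc n) z \<in> dsum r R (Suc n)"
  unfolding dsum_def
proof (intro CollectI conjI ballI allI impI)
  fix \<sigma> assume "\<sigma> \<in> idx (Suc n)"
  then show "Delta (Suc n) z \<sigma> \<in> QT r R"
    by (cases rule: idx_SucE) (use assms in \<open>simp_all add: dsum_def Delta_Suc_idx Delta_Suc_snoc\<close>)
qed (rule Delta_Suc_outside)

lemma cinv_in_dsum:
  assumes "root_datum r R cor" "is_base R P" "highest_root R P g"
    and "set s \<subseteq> Sgens P" "fst x \<in> R" "f \<in> dsum r R (length s)"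
  shows "cinv r cor g s x f \<in> dsum r R (length s)"
  unfolding dsum_def
proof (intro CollectI conjI ballI allI impI)
  fix \<sigma> assume \<sigma>: "\<sigma> \<in> idx (length s)"
  then have "\<forall>i\<in>set \<sigma>. s ! (i - 1) \<in> Sgens P"
    using assms(4) by (force simp: idx_def)
  then have "ev r cor g s \<sigma> x \<in> aff_roots R"
    by (intro aff_rootsI fst_ev_in_roots[OF assms(1-3)] assms(5))
  then show "cinv r cor g s x f \<sigma> \<in> QT r R"
    unfolding cinv_def using \<sigma> assms(6) by (intro divide_linx_in_QT) (simp_all add: dsum_def)
next
  fix \<sigma> assume "\<sigma> \<notin> idx (length s)"
  then show "cinv r cor g s x f \<sigma> = 0" using assms(6) by (simp add: dsum_def cinv_def)
qed

lemma YT_Nil: "YT r cor g [] = {f. f [] \<in> STf \<and> (\<forall>\<sigma>. \<sigma> \<noteq> [] \<longrightarrow> f \<sigma> = 0)}"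
  by (simp add: YT_def)

lemma YT_snoc:
  "YT r cor g (s @ [t]) =
     setplus (Delta (Suc (length s)) ` YT r cor g s)
       (cinv r cor g (s @ [t]) (sroot g t) ` Delta (Suc (length s)) ` YT r cor g s)"
  by (simp add: YT_def Let_def)

lemma zero_in_YT: "(\<lambda>_. 0) \<in> YT r cor g s"
proof (induction s rule: rev_induct)
  case Nil
  have "0 \<in> STf" unfolding STf_def Zero_fract_def by blast
  then show ?case by (simp add: YT_Nil)
next
  case (snoc t s)
  then show ?case
    unfolding YT_snoc setplus_def
    by (intro CollectI exI[of _ "\<lambda>_. 0"]) (force simp: Delta_zero cinv_zero)
qed

lemma YT_subset_dsum:
  assumes datum: "root_datum r R cor" "is_base R P" "highest_root R P g"
    and "set s \<subseteq> Sgens P"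
  shows "YT r cor g s \<subseteq> (dsum r R (length s) :: (nat list \<Rightarrow> 't::idom ST fract) set)"
  using assms(4)
proof (induction s rule: rev_induct)
  case Nil
  have "idx 0 = {[]}" by (auto simp: idx_def)
  then show ?case using STf_subset_QT by (auto simp: YT_Nil dsum_def)
next
  case (snoc t s)
  let ?D = "Delta (Suc (length s))" and ?c = "cinv r cor g (s @ [t]) (sroot g t)"
  have D: "?D z \<in> dsum r R (length (s @ [t]))" if "z \<in> YT r cor g s" for z :: "nat list \<Rightarrow> 't ST fract"
    using snoc that by (auto intro: Delta_in_dsum)
  have "fst (sroot g t) \<in> R"
    using snoc.prems by (intro fst_sroot_in_roots[OF datum]) simp
  then have C: "?c (?D z) \<in> dsum r R (length (s @ [t]))" if "z \<in> YT r cor g s" for z :: "nat list \<Rightarrow> 't ST fract"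
    using cinv_in_dsum[OF datum snoc.prems _ D[OF that]] by blast
  show ?case
  proof
    fix f :: "nat list \<Rightarrow> 't ST fract" assume "f \<in> YT r cor g (s @ [t])"
    then obtain z z' where "f = ?D z + ?c (?D z')" "z \<in> YT r cor g s" "z' \<in> YT r cor g s"
      unfolding YT_snoc setplus_def by blast
    then show "f \<in> dsum r R (length (s @ [t]))" using D C by (simp add: add_in_dsum)
  qed
qed

lemma Delta_eq_cinv_Delta_imp_zero:
  fixes z z' :: "nat list \<Rightarrow> 't::idom ST fract"
  assumes "root_datum r R cor" "is_base R P" "highest_root R P g" "t \<in> Sgens P"
    and "(2::'t) \<noteq> 0"
    and eq: "Delta (Suc (length s)) z = cinv r cor g (s @ [t]) (sroot g t) (Delta (Suc (length s)) z')"
  shows "Delta (Suc (length s)) z = (\<lambda>_. 0)"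
proof -
  have "z \<tau> = 0" if \<tau>: "\<tau> \<in> idx (length s)" for \<tau>
  proof -
    \<comment> \<open>\<open>F = 0\<close> is harmless (\<open>x / 0 = 0\<close>).\<close>
    define F where "F = Fract (linx r (ev r cor g (s @ [t]) \<tau> (sroot g t))) (1 :: 't ST)"
    have "z \<tau> = z' \<tau> / F"
      using fun_cong[OF eq, of \<tau>] \<tau> by (simp add: cinv_def F_def Delta_Suc_idx)
    moreover have "z \<tau> = z' \<tau> / - F"
      using fun_cong[OF eq, of "\<tau> @ [Suc (length s)]"] \<tau>
      by (simp add: cinv_def F_def Delta_Suc_snoc ev_snoc_sroot[OF assms(1-4)] linx_uminus)
    ultimately have "z \<tau> = - z \<tau>" by simp
    then show "z \<tau> = 0" using fract_eq_uminus_self ST_two_neq_zero assms(5) by blast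
  qed
  then show ?thesis by (auto simp: Delta_def)
qed

lemma Delta_image_inter_cinv_Delta_image:
  fixes A :: "(nat list \<Rightarrow> 't::idom ST fract) set"
  assumes "root_datum r R cor" "is_base R P" "highest_root R P g" "t \<in> Sgens P"
    and "(2::'t) \<noteq> 0" and "(\<lambda>_. 0) \<in> A"
  shows "Delta (Suc (length s)) ` A \<inter> cinv r cor g (s @ [t]) (sroot g t) ` Delta (Suc (length s)) ` A
    = {\<lambda>_. 0}"
    (is "?D ` A \<inter> ?c ` ?D ` A = _")
proof (rule equalityI)
  show "?D ` A \<inter> ?c ` ?D ` A \<subseteq> {\<lambda>_. 0}"
  proof
    fix f assume "f \<in> ?D ` A \<inter> ?c ` ?D ` A"
    then obtain z z' where f: "f = ?D z" "f = ?c (?D z')" by blast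
    then have "?D z = ?c (?D z')" by simp
    from Delta_eq_cinv_Delta_imp_zero[OF assms(1-5) this] show "f \<in> {\<lambda>_. 0}" using f by simp
  qed
  have "(\<lambda>_. 0) \<in> ?D ` A"
    by (rule image_eqI[where x = "\<lambda>_. 0"]) (simp_all add: Delta_zero assms(6))
  moreover have "(\<lambda>_. 0) \<in> ?c ` ?D ` A"
    by (rule image_eqI[where x = "\<lambda>_. 0"]) (simp_all add: cinv_zero calculation)
  ultimately show "{\<lambda>_. 0} \<subseteq> ?D ` A \<inter> ?c ` ?D ` A" by simp
qed

theorem lemma6p7:
  fixes r :: nat and R P :: "lat set" and cor :: "lat \<Rightarrow> lat" and g :: lat
    and s :: "lat option list"
  assumes "root_datum r R cor" and "reduced_rs R" and "irreducible_rs r R cor"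
    and "is_base R P" and "highest_root R P g"
    and "(2::'t::idom) \<noteq> 0"
    and "\<forall>a\<in>aff_roots R. (tens r a :: nat \<Rightarrow> 't) \<noteq> (\<lambda>_. 0)"
    and "set s \<subseteq> Sgens P" and "length s \<ge> 1"
  shows "(YT r cor g s :: (nat list \<Rightarrow> 't ST fract) set)
           = setplus (Delta (length s) ` YT r cor g (butlast s))
                     (cinv r cor g s (sroot g (last s)) ` Delta (length s) ` YT r cor g (butlast s))
         \<and> Delta (length s) ` YT r cor g (butlast s)
             \<inter> cinv r cor g s (sroot g (last s)) ` Delta (length s) ` YT r cor g (butlast s)
           = {(\<lambda>_. 0) :: nat list \<Rightarrow> 't ST fract}
         \<and> YT r cor g s \<subseteq> (dsum r R (length s) :: (nat list \<Rightarrow> 't ST fract) set)"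
proof -
  note datum = assms(1,4,5)
  obtain s' t where s: "s = s' @ [t]"
    using assms(9) by (cases s rule: rev_cases) auto
  have "t \<in> Sgens P" using assms(8) s by simp
  from Delta_image_inter_cinv_Delta_image[OF datum this assms(6) zero_in_YT, of s']
  show ?thesis
    using YT_snoc[of r cor g s' t] YT_subset_dsum[OF datum assms(8)] by (simp add: s)
qed

end
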